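(* For $0<x<1$, as power series in $t$ (convergent near $t=0$), \[ \frac{1}{x^{1/2}(1-x)^{1/2}}\left(\arcsin\!\big(x^{1/2}e^{(1-x)t}\big) - \arcsin\!\big(x^{1/2}\big)\right) = \sum_{n=0}^\infty 2^nF_n(x,1/2)\frac{t^{n+1}}{(n+1)!}. \]
   Context: For a permutation $\pi=\pi_1\cdots\pi_n$ of $[n]=\{1,\dots,n\}$, let $\mathrm{exc}(\pi)=|\{i\in[n]:\pi_i>i\}|$ and $\mathrm{cyc}(\pi)$ the number of cycles in its disjoint cycle decomposition. The bivariate Eulerian polynomials are $F_0(x,y)=1$ and $F_n(x,y)=\sum_{\pi\in\mathfrak S_n} x^{\mathrm{exc}(\pi)}y^{\mathrm{cyc}(\pi)}$ for $n>0$, where $\mathfrak S_n$ is the symmetric group on $[n]$; their exponential generating function is $\sum_{n\ge0}F_n(x,y)t^n/n! = \left(\frac{1-x}{e^{t(x-1)}-x}\right)^y$. *)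

theory Defs
  imports "HOL-Analysis.Analysis" "HOL-Combinatorics.Permutations"
begin

definition exc :: "nat \<Rightarrow> (nat \<Rightarrow> nat) \<Rightarrow> nat" where
  "exc n p = card {i \<in> {1..n}. p i > i}"

definition cycle_of :: "nat \<Rightarrow> (nat \<Rightarrow> nat) \<Rightarrow> nat \<Rightarrow> nat set" where
  "cycle_of n p i = {j \<in> {1..n}. \<exists>k. (p ^^ k) i = j}"

definition cyc :: "nat \<Rightarrow> (nat \<Rightarrow> nat) \<Rightarrow> nat" where
  "cyc n p = card (cycle_of n p ` {1..n})"

text \<open>Bivariate Eulerian polynomial F_n(x,y); F_0 = 1 (only the identity permutes the empty set).\<close>
definition bivEuler :: "nat \<Rightarrow> real \<Rightarrow> real \<Rightarrow> real" where
  "bivEuler n x y = (\<Sum>p\<in>{p. p permutes {1..n}}. x ^ exc n p * y ^ cyc n p)"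

end

theory Submission
  imports Defs "HOL-Computational_Algebra.Polynomial" "HOL-Complex_Analysis.Complex_Analysis"
begin

text \<open>
  Inserting n+1 into a permutation of [n], either as a new fixed point or right after some i
  in the cycle of i, gives F(n+1) = (y + n x) F(n) + x (1 - x) dF(n)/dx. Writing
  F(n) = (1 - x)^n H(n)(x / (1 - x)) turns this into H(n+1)(z) = (1 + z) (y H(n)(z) + z H(n)'(z)),
  which for y = 1/2 is exactly how the chain rule produces the successive derivatives of
  A(u) = ((1 - x) / (e^((x-1)u) - x))^(1/2), with z = x / (e^((x-1)u) - x). Hence the n-th
  derivative of A at 0 is F(n)(x, 1/2), and since A is holomorphic near 0 its Taylor series is
  the sum of F(n)(x, 1/2) u^n / n!. The left-hand side of the theorem vanishes at t = 0 and has
  derivative A(2t), so integrating this series termwise gives the claim.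
\<close>

section \<open>Inserting the largest element into a permutation\<close>

text \<open>If q fixes a, then insert_after a i q is q with a inserted into the cycle of i right
  after i: it maps i to a and a to q i, and agrees with q elsewhere.\<close>

definition insert_after :: "'a \<Rightarrow> 'a \<Rightarrow> ('a \<Rightarrow> 'a) \<Rightarrow> 'a \<Rightarrow> 'a" where
  "insert_after a i q = Transposition.transpose a (q i) \<circ> q"

lemma insert_after_apply:
  assumes "inj q" and "q a = a" and "i \<noteq> a"
  shows "insert_after a i q j = (if j = i then a else if j = a then q i else q j)"
proof -
  have "q j = a \<longleftrightarrow> j = a" and "q j = q i \<longleftrightarrow> j = i"
    using assms by (metis injD)+
  then show ?thesis by (auto simp: insert_after_def transpose_def)
qed

lemma sum_permutes_Suc:
  "(\<Sum>s | s permutes {1..Suc n}. f s) =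
     (\<Sum>q | q permutes {1..n}. f q + (\<Sum>i=1..n. f (insert_after (Suc n) i q)))"
proof -
  have "{1..Suc n} = insert (Suc n) {1..n}" by auto
  then have "(\<Sum>s | s permutes {1..Suc n}. f s) =
      (\<Sum>b\<in>insert (Suc n) {1..n}. \<Sum>q | q permutes {1..n}. f (Transposition.transpose (Suc n) b \<circ> q))"
    by (simp add: sum_over_permutations_insert)
  also have "\<dots> = (\<Sum>q | q permutes {1..n}.
      f q + (\<Sum>b=1..n. f (Transposition.transpose (Suc n) b \<circ> q)))"
    by (subst sum.swap) (simp add: sum.distrib)
  also have "\<dots> = (\<Sum>q | q permutes {1..n}. f q + (\<Sum>i=1..n. f (insert_after (Suc n) i q)))"
  proof (rule sum.cong)
    fix q assume "q \<in> {q. q permutes {1..n}}"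
    then have "bij_betw q {1..n} {1..n}" by (simp add: permutes_imp_bij)
    from sum.reindex_bij_betw[OF this, of "\<lambda>b. f (Transposition.transpose (Suc n) b \<circ> q)"]
    show "f q + (\<Sum>b=1..n. f (Transposition.transpose (Suc n) b \<circ> q)) =
        f q + (\<Sum>i=1..n. f (insert_after (Suc n) i q))"
      by (simp add: insert_after_def)
  qed simp
  finally show ?thesis .
qed

lemma exc_Suc_permutes: "q permutes {1..n} \<Longrightarrow> exc (Suc n) q = exc n q"
  unfolding exc_def by (rule arg_cong[where f = card]) (auto simp: le_Suc_eq permutes_not_in)

lemma exc_le: "exc n p \<le> n"
proof -
  have "exc n p \<le> card {1..n}" unfolding exc_def by (rule card_mono) auto
  then show ?thesis by simp
qed

lemma exc_insert_after:
  assumes q: "q permutes {1..n}" and i: "i \<in> {1..n}"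
  shows "exc (Suc n) (insert_after (Suc n) i q) = (if i < q i then exc n q else Suc (exc n q))"
proof -
  define S where "S = {j \<in> {1..n}. j < q j}"
  have qi: "q i \<in> {1..n}" using permutes_in_image[OF q] i by blast
  have "{j \<in> {1..Suc n}. j < insert_after (Suc n) i q j} = insert i (S - {i})"
    using i qi permutes_inj[OF q] permutes_not_in[OF q]
    by (auto simp: insert_after_apply S_def le_Suc_eq)
  then have "exc (Suc n) (insert_after (Suc n) i q) = card (insert i (S - {i}))"
    by (simp add: exc_def)
  also have "\<dots> = (if i \<in> S then card S else Suc (card S))"
    by (cases "i \<in> S") (simp_all add: insert_absorb S_def)
  finally show ?thesis using i by (simp add: S_def exc_def)
qed

lemma sum_exc_insert_after:
  assumes q: "q permutes {1..n}"
  shows "(\<Sum>i=1..n. x ^ exc (Suc n) (insert_after (Suc n) i q)) =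
    real (exc n q) * x ^ exc n q + real (n - exc n q) * x ^ Suc (exc n q)"
proof -
  define E where "E = {i \<in> {1..n}. i < q i}"
  have card_E: "card E = exc n q" by (simp add: E_def exc_def)
  have "card ({1..n} - E) = card {1..n} - card E" by (rule card_Diff_subset) (auto simp: E_def)
  then have card_not_E: "card ({1..n} - E) = n - exc n q" by (simp add: card_E)
  have "(\<Sum>i=1..n. x ^ exc (Suc n) (insert_after (Suc n) i q)) =
      (\<Sum>i=1..n. if i \<in> E then x ^ exc n q else x ^ Suc (exc n q))"
    by (intro sum.cong refl) (simp add: exc_insert_after[OF q] E_def)
  also have "\<dots> = (\<Sum>i\<in>E. x ^ exc n q) + (\<Sum>i\<in>{1..n} - E. x ^ Suc (exc n q))"
  proof -
    have "{1..n} \<inter> E = E" and "{1..n} \<inter> - E = {1..n} - E" by (auto simp: E_def)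
    then show ?thesis by (simp add: sum.If_cases)
  qed
  finally show ?thesis by (simp only: sum_constant card_E card_not_E)
qed

section \<open>Cycles under insertion\<close>

definition reach :: "('a \<Rightarrow> 'a) \<Rightarrow> 'a \<Rightarrow> 'a \<Rightarrow> bool" where
  "reach f a b \<longleftrightarrow> (\<exists>k. (f ^^ k) a = b)"

lemma reach_refl: "reach f a a"
  unfolding reach_def by (rule exI[of _ 0]) simp

lemma reach_step: "reach f a b \<Longrightarrow> reach f a (f b)"
  unfolding reach_def by (auto intro: exI[of _ "Suc _"])

lemma reach_trans: "reach f a b \<Longrightarrow> reach f b c \<Longrightarrow> reach f a c"
  unfolding reach_def by (auto simp flip: comp_apply[of "f ^^ _" "f ^^ _"] funpow_add)

lemma cycle_of_reach: "cycle_of n p i = {j \<in> {1..n}. reach p i j}"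
  by (simp add: cycle_of_def reach_def)

lemma reach_permutes_in:
  assumes "p permutes S" and "a \<in> S" and "reach p a b"
  shows "b \<in> S"
proof -
  from assms(3) obtain k where "(p ^^ k) a = b" by (auto simp: reach_def)
  with permutes_in_funpow_image[OF assms(1,2), of k] show ?thesis by simp
qed

lemma reach_permutes_back:
  assumes "p permutes S" and "finite S"
  shows "reach p (p a) a"
proof -
  have "permutation p" using assms by (auto simp: permutation_permutes)
  then obtain m where "0 < m" and "(p ^^ m) a = a" by (rule permutation_self)
  then obtain k where "(p ^^ Suc k) a = a" by (metis gr0_implies_Suc)
  then have "(p ^^ k) (p a) = a" by (simp only: funpow_Suc_right comp_apply)
  then show ?thesis by (auto simp: reach_def)
qed

context
  fixes a i :: 'a and q :: "'a \<Rightarrow> 'a"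
  assumes inj: "inj q" and fix_a: "q a = a" and i_ne_a: "i \<noteq> a"
begin

lemma insert_after_at_i: "insert_after a i q i = a"
  and insert_after_at_a: "insert_after a i q a = q i"
  and insert_after_other: "j \<noteq> i \<Longrightarrow> j \<noteq> a \<Longrightarrow> insert_after a i q j = q j"
  using i_ne_a by (auto simp: insert_after_apply inj fix_a)

lemma reach_insert_after_of_reach:
  assumes "reach q j b"
  shows "reach (insert_after a i q) j b"
proof -
  from assms obtain k where "(q ^^ k) j = b" by (auto simp: reach_def)
  then show ?thesis
  proof (induction k arbitrary: b)
    case 0
    then show ?case by (simp add: reach_refl)
  next
    case (Suc k)
    define c where "c = (q ^^ k) j"
    have IH: "reach (insert_after a i q) j c" and b: "b = q c"
      using Suc c_def by simp_all
    consider "c = i" | "c = a" | "c \<noteq> i" "c \<noteq> a" by blast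
    then show ?case
    proof cases
      case 1
      have "insert_after a i q (insert_after a i q c) = b"
        by (simp add: 1 b insert_after_at_i insert_after_at_a)
      with reach_step[OF reach_step[OF IH]] show ?thesis by simp
    next
      case 2
      then show ?thesis using IH by (simp add: b fix_a)
    next
      case 3
      from reach_step[OF IH] show ?thesis by (simp add: 3 b insert_after_other)
    qed
  qed
qed

lemma reach_of_reach_insert_after:
  assumes "(insert_after a i q ^^ k) j = b" and "j \<noteq> a"
  shows "if b = a then reach q j i else reach q j b"
  using assms(1)
proof (induction k arbitrary: b)
  case 0
  then show ?case using assms(2) by (simp add: reach_refl)
next
  case (Suc k)
  define c where "c = (insert_after a i q ^^ k) j"
  have IH: "if c = a then reach q j i else reach q j c" and b: "b = insert_after a i q c"
    using Suc c_def by simp_all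
  have q_eq_a: "q d = a \<longleftrightarrow> d = a" for d
    by (metis fix_a inj injD)
  consider "c = i" | "c = a" | "c \<noteq> i" "c \<noteq> a" by blast
  then show ?case
  proof cases
    case 1
    then show ?thesis using IH i_ne_a by (simp add: b insert_after_at_i)
  next
    case 2
    then show ?thesis using IH reach_step[of q j i] i_ne_a
      by (simp add: b insert_after_at_a q_eq_a)
  next
    case 3
    then show ?thesis using IH reach_step[of q j c]
      by (simp add: b insert_after_other q_eq_a)
  qed
qed

lemma reach_insert_after_iff:
  assumes "j \<noteq> a"
  shows "reach (insert_after a i q) j b \<longleftrightarrow> (if b = a then reach q j i else reach q j b)"
proof
  assume "reach (insert_after a i q) j b"
  then show "if b = a then reach q j i else reach q j b"
    using reach_of_reach_insert_after assms unfolding reach_def by blast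
next
  assume *: "if b = a then reach q j i else reach q j b"
  show "reach (insert_after a i q) j b"
  proof (cases "b = a")
    case True
    with * have "reach (insert_after a i q) j (insert_after a i q i)"
      by (intro reach_step reach_insert_after_of_reach) simp
    then show ?thesis by (simp add: True insert_after_at_i)
  qed (use * reach_insert_after_of_reach in simp)
qed

end

lemma cyc_Suc_permutes:
  assumes q: "q permutes {1..n}"
  shows "cyc (Suc n) q = Suc (cyc n q)"
proof -
  have old: "cycle_of (Suc n) q j = cycle_of n q j" if "j \<in> {1..n}" for j
    unfolding cycle_of_reach using reach_permutes_in[OF q that] by fastforce
  have "(q ^^ k) (Suc n) = Suc n" for k
    by (induction k) (simp_all add: permutes_not_in[OF q])
  then have new: "cycle_of (Suc n) q (Suc n) = {Suc n}"
    by (auto simp: cycle_of_def)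
  have "Suc n \<notin> cycle_of n q j" for j
    by (simp add: cycle_of_def)
  then have "{Suc n} \<notin> cycle_of n q ` {1..n}"
    by (metis image_iff insertI1)
  moreover have "cycle_of (Suc n) q ` {1..Suc n} = insert {Suc n} (cycle_of n q ` {1..n})"
    using old new by (simp add: atLeastAtMostSuc_conv)
  ultimately show ?thesis by (simp add: cyc_def)
qed

lemma cyc_insert_after:
  assumes q: "q permutes {1..n}" and i: "i \<in> {1..n}"
  shows "cyc (Suc n) (insert_after (Suc n) i q) = cyc n q"
proof -
  define s where "s = insert_after (Suc n) i q"
  have ctx: "inj q" "q (Suc n) = Suc n" "i \<noteq> Suc n"
    using i permutes_inj[OF q] permutes_not_in[OF q] by auto
  define g where "g D = (if i \<in> D then insert (Suc n) D else D)" for D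
  have old: "cycle_of (Suc n) s j = g (cycle_of n q j)" if j: "j \<in> {1..n}" for j
    using reach_permutes_in[OF q j] i j
    by (force simp: cycle_of_reach g_def s_def reach_insert_after_iff[OF ctx])
  have "reach s (Suc n) i"
  proof -
    have "reach s (q i) i"
      unfolding s_def by (rule reach_insert_after_of_reach[OF ctx reach_permutes_back[OF q]]) simp
    moreover have "reach s (Suc n) (q i)"
      using reach_step[OF reach_refl, of s "Suc n"] by (simp add: s_def insert_after_at_a[OF ctx])
    ultimately show ?thesis by (rule reach_trans[rotated])
  qed
  moreover have "reach s i (Suc n)"
    using reach_step[OF reach_refl, of s i] by (simp add: s_def insert_after_at_i[OF ctx])
  ultimately have new: "cycle_of (Suc n) s (Suc n) = cycle_of (Suc n) s i"
    unfolding cycle_of_reach by (blast intro: reach_trans)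
  have "cycle_of (Suc n) s ` {1..Suc n} = cycle_of (Suc n) s ` {1..n}"
    using new i by (auto simp: atLeastAtMostSuc_conv)
  also have "\<dots> = g ` cycle_of n q ` {1..n}"
    using old by (simp add: image_image)
  finally have "cyc (Suc n) s = card (g ` cycle_of n q ` {1..n})"
    by (simp add: cyc_def)
  also have "\<dots> = cyc n q"
  proof -
    have "g D - {Suc n} = D" if "D \<in> cycle_of n q ` {1..n}" for D
      using that by (auto simp: g_def cycle_of_def)
    then have "inj_on g (cycle_of n q ` {1..n})"
      by (rule inj_on_inverseI)
    then show ?thesis by (simp add: card_image cyc_def)
  qed
  finally show ?thesis by (simp add: s_def)
qed

section \<open>The recurrence for the bivariate Eulerian polynomials\<close>

definition bivEuler_dx :: "nat \<Rightarrow> real \<Rightarrow> real \<Rightarrow> real" where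
  "bivEuler_dx n x y = (\<Sum>p | p permutes {1..n}. real (exc n p) * x ^ (exc n p - 1) * y ^ cyc n p)"

lemma has_real_derivative_bivEuler:
  "((\<lambda>x. bivEuler n x y) has_real_derivative bivEuler_dx n x y) (at x)"
  unfolding bivEuler_def bivEuler_dx_def by (auto intro!: derivative_eq_intros)

lemma bivEuler_Suc:
  "bivEuler (Suc n) x y = (y + real n * x) * bivEuler n x y + x * (1 - x) * bivEuler_dx n x y"
proof -
  have "bivEuler (Suc n) x y = (\<Sum>q | q permutes {1..n}.
      x ^ exc n q * y ^ Suc (cyc n q)
      + (\<Sum>i=1..n. x ^ exc (Suc n) (insert_after (Suc n) i q)) * y ^ cyc n q)"
    unfolding bivEuler_def sum_permutes_Suc
    by (intro sum.cong refl)
      (simp add: exc_Suc_permutes cyc_Suc_permutes cyc_insert_after sum_distrib_right)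
  also have "\<dots> = (\<Sum>q | q permutes {1..n}. (y + real n * x) * (x ^ exc n q * y ^ cyc n q)
      + x * (1 - x) * (real (exc n q) * x ^ (exc n q - 1) * y ^ cyc n q))"
  proof (intro sum.cong refl)
    fix q assume "q \<in> {q. q permutes {1..n}}"
    then have q: "q permutes {1..n}" by simp
    define e where "e = exc n q"
    define c where "c = cyc n q"
    have "x * (1 - x) * (real e * x ^ (e - 1) * y ^ c) = (1 - x) * (real e * x ^ e) * y ^ c"
      by (cases e) (simp_all add: algebra_simps)
    moreover have "real (n - e) = real n - real e" using exc_le[of n q] by (simp add: e_def)
    ultimately show "x ^ exc n q * y ^ Suc (cyc n q)
        + (\<Sum>i=1..n. x ^ exc (Suc n) (insert_after (Suc n) i q)) * y ^ cyc n q =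
      (y + real n * x) * (x ^ exc n q * y ^ cyc n q)
        + x * (1 - x) * (real (exc n q) * x ^ (exc n q - 1) * y ^ cyc n q)"
      unfolding sum_exc_insert_after[OF q] e_def[symmetric] c_def[symmetric]
      by (simp add: algebra_simps)
  qed
  finally show ?thesis
    by (simp add: bivEuler_def bivEuler_dx_def sum.distrib sum_distrib_left)
qed

section \<open>Polynomial form in \<open>x / (1 - x)\<close>\<close>

fun bivEuler_poly :: "'a::field_char_0 \<Rightarrow> nat \<Rightarrow> 'a poly" where
  "bivEuler_poly y 0 = 1"
| "bivEuler_poly y (Suc n) =
     [:1, 1:] * (smult y (bivEuler_poly y n) + pCons 0 (pderiv (bivEuler_poly y n)))"

lemma poly_bivEuler_poly_Suc:
  "poly (bivEuler_poly y (Suc n)) z =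
     (1 + z) * (y * poly (bivEuler_poly y n) z + z * poly (pderiv (bivEuler_poly y n)) z)"
  by (simp add: algebra_simps)

lemma bivEuler_poly_of_real:
  "bivEuler_poly (of_real y) n = map_poly of_real (bivEuler_poly y n)"
proof (rule poly_eqI)
  fix k
  show "coeff (bivEuler_poly (of_real y) n) k = coeff (map_poly of_real (bivEuler_poly y n)) k"
    by (induction n arbitrary: k) (auto simp: coeff_map_poly coeff_pderiv coeff_pCons split: nat.split)
qed

lemma poly_map_poly_of_real: "poly (map_poly of_real p) (of_real z) = of_real (poly p z)"
  by (simp add: poly_altdef degree_map_poly coeff_map_poly)

lemma has_real_derivative_poly_ratio:
  fixes x :: real
  assumes "x \<noteq> 1"
  defines "z \<equiv> x / (1 - x)"
  shows "((\<lambda>x. (1 - x) ^ n * poly p (x / (1 - x))) has_real_derivative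
    (1 - x) ^ n * (1 + z) * ((1 + z) * poly (pderiv p) z - real n * poly p z)) (at x)"
proof (rule DERIV_cong)
  have "((\<lambda>x. x / (1 - x)) has_real_derivative 1 / (1 - x) ^ 2) (at x)"
    using assms by (auto intro!: derivative_eq_intros simp: field_simps power2_eq_square)
  moreover have "((\<lambda>x. (1 - x) ^ n) has_real_derivative - (real n * (1 - x) ^ (n - 1))) (at x)"
    by (auto intro!: derivative_eq_intros)
  ultimately show "((\<lambda>x. (1 - x) ^ n * poly p (x / (1 - x))) has_real_derivative
      - (real n * (1 - x) ^ (n - 1)) * poly p z + poly (pderiv p) z * (1 / (1 - x) ^ 2) * (1 - x) ^ n)
      (at x)"
    unfolding z_def by (intro DERIV_mult DERIV_chain2[OF poly_DERIV])
  have "1 / (1 - x) ^ 2 = (1 + z) ^ 2"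
    using assms by (simp add: z_def field_simps)
  moreover have "real n * (1 - x) ^ (n - 1) = (1 - x) ^ n * (1 + z) * real n"
    using assms by (cases n) (simp_all add: z_def field_simps)
  ultimately show "- (real n * (1 - x) ^ (n - 1)) * poly p z + poly (pderiv p) z * (1 / (1 - x) ^ 2) * (1 - x) ^ n =
      (1 - x) ^ n * (1 + z) * ((1 + z) * poly (pderiv p) z - real n * poly p z)"
    by (simp add: algebra_simps power2_eq_square)
qed

lemma bivEuler_eq_poly:
  fixes x :: real
  assumes "x < 1"
  shows "bivEuler n x y = (1 - x) ^ n * poly (bivEuler_poly y n) (x / (1 - x))"
  using assms
proof (induction n arbitrary: x)
  case 0
  then show ?case by (simp add: bivEuler_def exc_def cyc_def permutes_empty)
next
  case (Suc n)
  define z where "z = x / (1 - x)"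
  define P where "P = bivEuler_poly y n"
  have "((\<lambda>x. (1 - x) ^ n * poly P (x / (1 - x))) has_real_derivative bivEuler_dx n x y) (at x)"
    by (rule has_field_derivative_transform_within_open[OF has_real_derivative_bivEuler, of "{..<1}"])
      (use Suc in \<open>simp_all add: P_def\<close>)
  then have dx: "bivEuler_dx n x y =
      (1 - x) ^ n * (1 + z) * ((1 + z) * poly (pderiv P) z - real n * poly P z)"
    using Suc.prems by (auto intro: DERIV_unique has_real_derivative_poly_ratio simp: z_def)
  have xz: "(1 - x) * (1 + z) = 1" "x * (1 + z) = z"
    using Suc.prems by (simp_all add: z_def field_simps)
  have "bivEuler (Suc n) x y = (y + real n * x) * ((1 - x) ^ n * poly P z)
      + x * (1 - x) * ((1 - x) ^ n * (1 + z) * ((1 + z) * poly (pderiv P) z - real n * poly P z))"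
    by (simp add: bivEuler_Suc Suc P_def z_def dx)
  also have "\<dots> = (1 - x) ^ Suc n * ((1 + z) * (y * poly P z + z * poly (pderiv P) z))"
  proof -
    have "(y + m * x) * (A * p) + x * (1 - x) * (A * (1 + z) * ((1 + z) * q - m * p)) =
        (1 - x) * A * ((1 + z) * (y * p + z * q))" for A p q m :: real
      using xz by algebra
    then show ?thesis by simp
  qed
  finally show ?case
    unfolding poly_bivEuler_poly_Suc P_def[symmetric] z_def[symmetric] .
qed

section \<open>Taylor coefficients of the square root of the generating function\<close>

definition egf_denom :: "real \<Rightarrow> complex \<Rightarrow> complex" where
  "egf_denom x u = exp (of_real (x - 1) * u) - of_real x"

definition egf_ratio :: "real \<Rightarrow> complex \<Rightarrow> complex" where
  "egf_ratio x u = of_real x / egf_denom x u"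

definition sqrt_egf :: "real \<Rightarrow> complex \<Rightarrow> complex" where
  "sqrt_egf x u = csqrt (of_real (1 - x) / egf_denom x u)"

text \<open>On this half-plane the radicand of sqrt_egf has positive real part, so it stays off the
  branch cut of csqrt.\<close>

definition sqrt_egf_domain :: "real \<Rightarrow> complex set" where
  "sqrt_egf_domain x = {u. 0 < Re (egf_denom x u)}"

text \<open>The chain rule produces bivEuler_poly (1/2) here because s = egf_ratio x and
  A = sqrt_egf x satisfy s' = (1 - x) s (1 + s) and A' = (1 - x) (1 + s) A / 2.\<close>

definition sqrt_egf_deriv :: "real \<Rightarrow> nat \<Rightarrow> complex \<Rightarrow> complex" where
  "sqrt_egf_deriv x n u =
    of_real (1 - x) ^ n * poly (bivEuler_poly (1/2) n) (egf_ratio x u) * sqrt_egf x u"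

lemma open_sqrt_egf_domain: "open (sqrt_egf_domain x)"
  unfolding sqrt_egf_domain_def egf_denom_def
  by (rule open_Collect_less) (auto intro!: continuous_intros)

lemma has_field_derivative_egf_denom:
  "(egf_denom x has_field_derivative (of_real (x - 1) * (egf_denom x u + of_real x))) (at u)"
  unfolding egf_denom_def by (auto intro!: derivative_eq_intros)

lemma has_field_derivative_inverse_egf_denom:
  assumes "egf_denom x u \<noteq> 0"
  shows "((\<lambda>u. c / egf_denom x u) has_field_derivative
    of_real (1 - x) * (c / egf_denom x u) * (1 + egf_ratio x u)) (at u)"
proof (rule DERIV_cong)
  show "((\<lambda>u. c / egf_denom x u) has_field_derivative
      - (c * (of_real (x - 1) * (egf_denom x u + of_real x))) / (egf_denom x u)\<^sup>2) (at u)"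
    using assms by (auto intro!: derivative_eq_intros has_field_derivative_egf_denom
        simp: power2_eq_square)
  show "- (c * (of_real (x - 1) * (egf_denom x u + of_real x))) / (egf_denom x u)\<^sup>2 =
      of_real (1 - x) * (c / egf_denom x u) * (1 + egf_ratio x u)"
    using assms by (simp add: egf_ratio_def field_simps power2_eq_square)
qed

context
  fixes x :: real
  assumes x_lt_1: "x < 1"
begin

lemma zero_in_sqrt_egf_domain: "0 \<in> sqrt_egf_domain x"
  using x_lt_1 by (simp add: sqrt_egf_domain_def egf_denom_def)

lemma has_field_derivative_sqrt_egf:
  assumes u: "u \<in> sqrt_egf_domain x"
  shows "(sqrt_egf x has_field_derivative of_real (1 - x) / 2 * (1 + egf_ratio x u) * sqrt_egf x u) (at u)"
proof -
  define h where "h = of_real (1 - x) / egf_denom x u"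
  have "0 < Re (egf_denom x u)" using u by (simp add: sqrt_egf_domain_def)
  then have "egf_denom x u \<noteq> 0" and "0 < Re h"
    using x_lt_1 by (auto simp: h_def Re_divide intro!: divide_pos_pos add_pos_nonneg)
  then have "h \<notin> \<real>\<^sub>\<le>\<^sub>0" by (simp add: complex_nonpos_Reals_iff)
  from has_field_derivative_csqrt'[OF has_field_derivative_inverse_egf_denom this[unfolded h_def]]
  have "(sqrt_egf x has_field_derivative of_real (1 - x) * h * (1 + egf_ratio x u) / (2 * csqrt h)) (at u)"
    using \<open>egf_denom x u \<noteq> 0\<close> unfolding sqrt_egf_def[abs_def] h_def .
  moreover have "of_real (1 - x) * h * (1 + egf_ratio x u) / (2 * csqrt h) =
      of_real (1 - x) / 2 * (1 + egf_ratio x u) * sqrt_egf x u"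
  proof -
    have "csqrt h \<noteq> 0" using \<open>0 < Re h\<close> by auto
    then have "of_real (1 - x) * (csqrt h * csqrt h) * (1 + egf_ratio x u) / (2 * csqrt h) =
        of_real (1 - x) / 2 * (1 + egf_ratio x u) * csqrt h"
      by (simp add: field_simps)
    moreover have "csqrt h * csqrt h = h" by (simp flip: power2_eq_square)
    ultimately show ?thesis by (simp only: sqrt_egf_def h_def)
  qed
  ultimately show ?thesis by (rule DERIV_cong)
qed

lemma has_field_derivative_sqrt_egf_deriv:
  assumes u: "u \<in> sqrt_egf_domain x"
  shows "(sqrt_egf_deriv x n has_field_derivative sqrt_egf_deriv x (Suc n) u) (at u)"
proof -
  have "egf_denom x u \<noteq> 0" using u by (auto simp: sqrt_egf_domain_def)
  then have "(egf_ratio x has_field_derivative of_real (1 - x) * egf_ratio x u * (1 + egf_ratio x u)) (at u)"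
    using has_field_derivative_inverse_egf_denom unfolding egf_ratio_def[abs_def] by blast
  then show ?thesis
    unfolding sqrt_egf_deriv_def[abs_def] poly_bivEuler_poly_Suc
    by (auto intro!: derivative_eq_intros DERIV_chain2[OF poly_DERIV] has_field_derivative_sqrt_egf[OF u]
        simp: algebra_simps)
qed

lemma higher_deriv_sqrt_egf:
  assumes "u \<in> sqrt_egf_domain x"
  shows "(deriv ^^ n) (sqrt_egf x) u = sqrt_egf_deriv x n u"
  using assms
proof (induction n arbitrary: u)
  case 0
  then show ?case by (simp add: sqrt_egf_deriv_def)
next
  case (Suc n)
  have "\<forall>\<^sub>F v in nhds u. (deriv ^^ n) (sqrt_egf x) v = sqrt_egf_deriv x n v"
    using eventually_nhds_in_open[OF open_sqrt_egf_domain Suc.prems] by (auto elim!: eventually_mono Suc.IH)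
  then have "(deriv ^^ Suc n) (sqrt_egf x) u = deriv (sqrt_egf_deriv x n) u"
    by (simp add: deriv_cong_ev)
  also have "\<dots> = sqrt_egf_deriv x (Suc n) u"
    by (rule DERIV_imp_deriv[OF has_field_derivative_sqrt_egf_deriv[OF Suc.prems]])
  finally show ?case .
qed

lemma sqrt_egf_deriv_0: "sqrt_egf_deriv x n 0 = of_real (bivEuler n x (1/2))"
proof -
  have "egf_ratio x 0 = of_real (x / (1 - x))" and "sqrt_egf x 0 = 1"
    using x_lt_1 by (simp_all add: egf_ratio_def sqrt_egf_def egf_denom_def)
  moreover have "bivEuler_poly (1/2 :: complex) n = map_poly of_real (bivEuler_poly (1/2) n)"
    by (simp flip: bivEuler_poly_of_real)
  ultimately show ?thesis
    by (simp only: sqrt_egf_deriv_def poly_map_poly_of_real bivEuler_eq_poly[OF x_lt_1]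
        of_real_mult of_real_power mult_1_right)
qed

end

lemma bivEuler_half_egf:
  fixes x :: real
  assumes "x < 1"
  obtains r where "0 < r" and "\<And>t. \<bar>t\<bar> < r \<Longrightarrow> x < exp ((x - 1) * t)"
    and "\<And>t. \<bar>t\<bar> < r \<Longrightarrow>
      (\<lambda>n. bivEuler n x (1/2) * t ^ n / fact n) sums sqrt ((1 - x) / (exp ((x - 1) * t) - x))"
proof -
  obtain r where "0 < r" and r: "ball 0 r \<subseteq> sqrt_egf_domain x"
    using open_sqrt_egf_domain zero_in_sqrt_egf_domain[OF assms] open_contains_ball
    by blast
  have hol: "sqrt_egf x holomorphic_on ball 0 r"
    using has_field_derivative_sqrt_egf[OF assms] r
    by (auto simp: holomorphic_on_open intro!: exI)
  show ?thesis
  proof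
    show "0 < r" by fact
  next
    fix t :: real assume "\<bar>t\<bar> < r"
    then have ball: "complex_of_real t \<in> ball 0 r" by (simp add: dist_norm)
    then have t: "of_real t \<in> sqrt_egf_domain x" using r by auto
    have denom: "egf_denom x (of_real t) = of_real (exp ((x - 1) * t) - x)"
      by (simp only: egf_denom_def of_real_diff of_real_mult flip: exp_of_real)
    with t show pos: "x < exp ((x - 1) * t)"
      by (simp add: sqrt_egf_domain_def)
    from holomorphic_power_series[OF hol ball]
    have "(\<lambda>n. of_real (bivEuler n x (1/2) * t ^ n / fact n)) sums sqrt_egf x (of_real t)"
      by (simp add: higher_deriv_sqrt_egf[OF assms zero_in_sqrt_egf_domain[OF assms]]
          sqrt_egf_deriv_0[OF assms] field_simps)
    also have "sqrt_egf x (of_real t) = of_real (sqrt ((1 - x) / (exp ((x - 1) * t) - x)))"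
      using pos assms by (simp add: sqrt_egf_def denom flip: of_real_diff of_real_divide)
    finally show "(\<lambda>n. bivEuler n x (1/2) * t ^ n / fact n) sums sqrt ((1 - x) / (exp ((x - 1) * t) - x))"
      by (simp only: sums_of_real_iff)
  qed
qed

section \<open>Integration\<close>

lemma has_real_derivative_arcsin_exp:
  fixes x t :: real
  assumes "0 < x" and "x < 1" and "x < exp ((x - 1) * (2 * t))"
  shows "((\<lambda>t. (arcsin (sqrt x * exp ((1 - x) * t)) - arcsin (sqrt x)) / (sqrt x * sqrt (1 - x)))
    has_real_derivative sqrt ((1 - x) / (exp ((x - 1) * (2 * t)) - x))) (at t)"
proof -
  define a where "a = exp ((1 - x) * t)"
  have a: "0 < a" "exp ((x - 1) * (2 * t)) = 1 / a\<^sup>2"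
    by (simp_all add: a_def power2_eq_square field_simps flip: exp_add)
  then have "x < 1 / a\<^sup>2" using assms(3) by simp
  then have "x * a\<^sup>2 < 1" using a(1) by (simp add: field_simps)
  then have "(sqrt x * a)\<^sup>2 < 1\<^sup>2" using assms(1) by (simp add: power_mult_distrib)
  then have "sqrt x * a < 1" by (rule power_less_imp_less_base) simp
  moreover have "- 1 < sqrt x * a"
    using mult_pos_pos[OF real_sqrt_gt_zero[OF assms(1)] a(1)] by linarith
  ultimately have "((\<lambda>t. arcsin (sqrt x * exp ((1 - x) * t))) has_real_derivative
      inverse (sqrt (1 - (sqrt x * a)\<^sup>2)) * (sqrt x * (a * (1 - x)))) (at t)"
    unfolding a_def by (auto intro!: DERIV_chain2[OF DERIV_arcsin] derivative_eq_intros)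
  then have "((\<lambda>t. (arcsin (sqrt x * exp ((1 - x) * t)) - arcsin (sqrt x)) / (sqrt x * sqrt (1 - x)))
      has_real_derivative (inverse (sqrt (1 - (sqrt x * a)\<^sup>2)) * (sqrt x * (a * (1 - x))) - 0)
        / (sqrt x * sqrt (1 - x))) (at t)"
    by (intro DERIV_cdivide DERIV_diff DERIV_const)
  moreover have "(inverse (sqrt (1 - (sqrt x * a)\<^sup>2)) * (sqrt x * (a * (1 - x))) - 0) / (sqrt x * sqrt (1 - x))
      = sqrt ((1 - x) / (exp ((x - 1) * (2 * t)) - x))"
  proof -
    have "inverse q * (r * (a * (s * s))) / (r * s) = a * s / q" if "r \<noteq> 0" "s \<noteq> 0" for q r s :: real
      using that by (simp add: field_simps)
    from this[of "sqrt x" "sqrt (1 - x)" "sqrt (1 - x * a\<^sup>2)"]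
    have "(inverse (sqrt (1 - (sqrt x * a)\<^sup>2)) * (sqrt x * (a * (1 - x))) - 0) / (sqrt x * sqrt (1 - x))
        = a * sqrt (1 - x) / sqrt (1 - x * a\<^sup>2)"
      using assms(1,2) by (simp add: power_mult_distrib)
    also have "\<dots> = sqrt ((1 - x) / (exp ((x - 1) * (2 * t)) - x))"
    proof (rule real_sqrt_unique[symmetric])
      have "(1 - x) / (1 / a\<^sup>2 - x) = a\<^sup>2 * (1 - x) / (1 - x * a\<^sup>2)"
        using a(1) by (simp add: field_simps)
      moreover have "(a * sqrt (1 - x) / sqrt (1 - x * a\<^sup>2))\<^sup>2 = a\<^sup>2 * (1 - x) / (1 - x * a\<^sup>2)"
        using assms(2) \<open>x * a\<^sup>2 < 1\<close> by (simp add: power_divide power_mult_distrib)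
      ultimately show "(a * sqrt (1 - x) / sqrt (1 - x * a\<^sup>2))\<^sup>2 = (1 - x) / (exp ((x - 1) * (2 * t)) - x)"
        unfolding a(2) by simp
    qed (use assms(2) a(1) \<open>x * a\<^sup>2 < 1\<close> in simp)
    finally show ?thesis .
  qed
  ultimately show ?thesis by simp
qed

lemma sums_antiderivative_power_series:
  fixes a :: "nat \<Rightarrow> real"
  assumes sums: "\<And>t. \<bar>t\<bar> < r \<Longrightarrow> (\<lambda>n. a n * t ^ n) sums g t"
    and deriv: "\<And>t. \<bar>t\<bar> < r \<Longrightarrow> (f has_real_derivative g t) (at t)"
    and t: "\<bar>t\<bar> < r"
  shows "(\<lambda>n. a n * t ^ Suc n / Suc n) sums (f t - f 0)"
proof -
  define c where "c n = (if n = 0 then 0 else a (n - 1) / n)" for n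
  define S where "S z = (\<Sum>n. c n * z ^ n)" for z
  have c_Suc: "c (Suc n) * z ^ Suc n = a n * z ^ Suc n / Suc n" for n z
    by (simp add: c_def)
  have summable: "summable (\<lambda>n. c n * z ^ n)" if z: "\<bar>z\<bar> < r" for z
  proof -
    have "summable (\<lambda>n. a n * ((\<bar>z\<bar> + r) / 2) ^ n)"
      using sums_summable[OF sums] z by simp
    then have "summable (\<lambda>n. norm (a n * z ^ n))"
      by (rule powser_insidea) (use z in simp)
    then have "summable (\<lambda>n. \<bar>z\<bar> * norm (a n * z ^ n))"
      by (rule summable_mult)
    moreover have "norm (c (Suc n) * z ^ Suc n) \<le> \<bar>z\<bar> * norm (a n * z ^ n)" for n
    proof -
      have "norm (c (Suc n) * z ^ Suc n) = \<bar>z\<bar> * norm (a n * z ^ n) / Suc n"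
        unfolding c_Suc by (simp add: abs_mult)
      also have "\<dots> \<le> \<bar>z\<bar> * norm (a n * z ^ n)"
        by (simp add: divide_le_eq mult_le_cancel_left1 mult_less_0_iff)
      finally show ?thesis .
    qed
    ultimately have "summable (\<lambda>n. c (Suc n) * z ^ Suc n)"
      by (rule summable_comparison_test')
    then show ?thesis using summable_Suc_iff by blast
  qed
  have "((\<lambda>z. S z - f z) has_real_derivative 0) (at z)" if "\<bar>z\<bar> < r" for z
  proof -
    have "(S has_real_derivative (\<Sum>n. diffs c n * z ^ n)) (at z)"
      unfolding S_def[abs_def] by (rule termdiffs_strong'[of r]) (use summable that in auto)
    moreover have "diffs c = a" by (simp add: diffs_def c_def fun_eq_iff)
    ultimately show ?thesis
      using DERIV_diff[OF _ deriv[OF that]] sums_unique[OF sums[OF that]] by fastforce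
  qed
  then have "S t - f t = S 0 - f 0"
    by (intro DERIV_isconst3[of "- r" r]) (use t in auto)
  moreover have "S 0 = 0" by (simp add: S_def c_def)
  ultimately have "S t = f t - f 0" by simp
  moreover have "(\<lambda>n. c (Suc n) * t ^ Suc n) sums S t"
    using sums_Suc_iff[of "\<lambda>n. c n * t ^ n"] summable_sums[OF summable[OF t]] by (simp add: S_def c_def)
  ultimately show ?thesis by (simp only: c_Suc)
qed

theorem mainTheorem11:
  fixes x :: real
  assumes "0 < x" and "x < 1"
  shows "\<exists>r>0. \<forall>t::real. \<bar>t\<bar> < r \<longrightarrow>
    (\<lambda>n. 2 ^ n * bivEuler n x (1/2) * t ^ (Suc n) / fact (Suc n)) sums
      ((arcsin (sqrt x * exp ((1 - x) * t)) - arcsin (sqrt x)) / (sqrt x * sqrt (1 - x)))"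
proof -
  obtain r where "0 < r" and pos: "\<And>t. \<bar>t\<bar> < r \<Longrightarrow> x < exp ((x - 1) * t)"
    and egf: "\<And>t. \<bar>t\<bar> < r \<Longrightarrow>
      (\<lambda>n. bivEuler n x (1/2) * t ^ n / fact n) sums sqrt ((1 - x) / (exp ((x - 1) * t) - x))"
    using bivEuler_half_egf[OF assms(2)] by blast
  define G where "G t = (arcsin (sqrt x * exp ((1 - x) * t)) - arcsin (sqrt x)) / (sqrt x * sqrt (1 - x))"
    for t
  have "(\<lambda>n. 2 ^ n * bivEuler n x (1/2) / fact n * t ^ Suc n / Suc n) sums (G t - G 0)"
    if "\<bar>t\<bar> < r / 2" for t
  proof (rule sums_antiderivative_power_series)
    show "(\<lambda>n. 2 ^ n * bivEuler n x (1/2) / fact n * s ^ n) sums sqrt ((1 - x) / (exp ((x - 1) * (2 * s)) - x))"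
      if "\<bar>s\<bar> < r / 2" for s
      using egf[of "2 * s"] that by (simp add: power_mult_distrib field_simps)
    show "(G has_real_derivative sqrt ((1 - x) / (exp ((x - 1) * (2 * s)) - x))) (at s)"
      if "\<bar>s\<bar> < r / 2" for s
      unfolding G_def[abs_def] using has_real_derivative_arcsin_exp assms pos[of "2 * s"] that by simp
  qed (use that in simp)
  then show ?thesis
    using \<open>0 < r\<close> by (intro exI[of _ "r / 2"]) (simp add: G_def field_simps)
qed

end
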